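(* Let $w$ be an nTL-monomial for $P_n$ and let $x_i$ be a letter occurring in $w$. If $i$ is the $j$-th smallest among the distinct indices occurring in $w$, then $x_i$ occurs at most $j$ times in $w$; likewise, if $i$ is the $j$-th largest among the distinct indices occurring in $w$, then $x_i$ occurs at most $j$ times in $w$.
   Context: The nil-Temperley-Lieb algebra $A_n$ of the path graph $P_n$ is the unital associative algebra generated by $x_1,\dots,x_n$ subject to the relations $x_i^2=0$; $x_ix_j=x_jx_i$ if $|i-j|>1$; $x_ix_{i+1}x_i=0$ and $x_{i+1}x_ix_{i+1}=0$ for $1\le i<n$. Two words are equivalent if one can be obtained from the other by repeatedly swapping adjacent letters $x_ix_j\to x_jx_i$ with $|i-j|>1$. A word is reducible if it equals $0$ in $A_n$. An nTL-monomial is a word that is not reducible and lexicographically smallest (by index sequence) among all words equivalent to it. *)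

theory Defs
  imports Main
begin

type_synonym word = "nat list"

text \<open>Elements of the free associative algebra over a field 'k on letters x_1,...,x_n are
represented as formal sums: lists of (coefficient, word) pairs.  The coefficient of a word z
in such a formal sum:\<close>
definition fcoeff :: "('k::field \<times> word) list \<Rightarrow> word \<Rightarrow> 'k" where
  "fcoeff xs z = sum_list (map fst (filter (\<lambda>p. snd p = z) xs))"

text \<open>The defining relations of the nil-Temperley-Lieb algebra A_n of the path P_n,
each written as an element r of the free algebra (meaning r = 0).\<close>
definition nTL_rels :: "nat \<Rightarrow> ('k::field \<times> word) list set" where
  "nTL_rels n =
     {[(1, [i, i])] | i. 1 \<le> i \<and> i \<le> n}
   \<union> {[(1, [i, j]), (-1, [j, i])] | i j. 1 \<le> i \<and> i \<le> n \<and> 1 \<le> j \<and> j \<le> n \<and>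
                                         (i > j + 1 \<or> j > i + 1)}
   \<union> {[(1, [i, Suc i, i])] | i. 1 \<le> i \<and> i < n}
   \<union> {[(1, [Suc i, i, Suc i])] | i. 1 \<le> i \<and> i < n}"

definition sandwich :: "word \<Rightarrow> ('k::field \<times> word) list \<Rightarrow> word \<Rightarrow> ('k \<times> word) list" where
  "sandwich u r v = map (\<lambda>(c, y). (c, u @ y @ v)) r"

definition in_nTL_ideal :: "nat \<Rightarrow> (word \<Rightarrow> 'k::field) \<Rightarrow> bool" where
  "in_nTL_ideal n f \<longleftrightarrow>
     (\<exists>ts :: ('k \<times> word \<times> ('k \<times> word) list \<times> word) list.
        (\<forall>(c, u, r, v) \<in> set ts. r \<in> nTL_rels n) \<and>
        (\<forall>z. f z = sum_list (map (\<lambda>(c, u, r, v). c * fcoeff (sandwich u r v) z) ts)))"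

text \<open>A word is reducible if it equals 0 in A_n (over the field 'k).\<close>
definition nTL_reducible :: "'k::field itself \<Rightarrow> nat \<Rightarrow> word \<Rightarrow> bool" where
  "nTL_reducible _ n w \<longleftrightarrow> in_nTL_ideal n (\<lambda>z. if z = w then (1::'k) else 0)"

definition nTL_swap :: "word \<Rightarrow> word \<Rightarrow> bool" where
  "nTL_swap w w' \<longleftrightarrow> (\<exists>a b i j. (i > j + 1 \<or> j > i + 1) \<and> w = a @ [i, j] @ b \<and> w' = a @ [j, i] @ b)"

definition nTL_equiv :: "word \<Rightarrow> word \<Rightarrow> bool" where
  "nTL_equiv = nTL_swap\<^sup>*\<^sup>*"

definition nTL_monomial :: "'k::field itself \<Rightarrow> nat \<Rightarrow> word \<Rightarrow> bool" where
  "nTL_monomial K n w \<longleftrightarrow>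
     set w \<subseteq> {1..n} \<and> \<not> nTL_reducible K n w \<and>
     (\<forall>w'. nTL_equiv w w' \<longrightarrow> (w', w) \<notin> lexord {(a, b). a < b})"

end

theory Submission
  imports Defs
begin

text \<open>If two consecutive occurrences of a letter \<open>a\<close> enclose no
occurrence of a neighbour \<open>b\<close> of \<open>a\<close>, the word is zero in \<open>A\<^sub>n\<close>: by induction on the length of
the gap, the other neighbour \<open>c\<close> of \<open>a\<close> occurs there not at all (then the two \<open>a\<close>'s commute
together into \<open>x\<^sub>a\<^sup>2\<close>), exactly once (then they commute together into \<open>x\<^sub>a x\<^sub>c x\<^sub>a\<close>), or twice
in a row with a gap free of \<open>c\<close> and of its neighbour \<open>a\<close>.  Hence between consecutive occurrences
of \<open>a\<close> every neighbour occurs, so \<open>a\<close> occurs at most once more than each neighbour; climbing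
from the smallest (or largest) index occurring in the word gives the bounds.\<close>

lemma fcoeff_sandwich:
  "fcoeff (sandwich u r v) z = sum_list (map fst (filter (\<lambda>p. u @ snd p @ v = z) r))"
  by (induction r) (auto simp: fcoeff_def sandwich_def)

lemma in_nTL_ideal_sandwich:
  assumes "(r :: ('k::field \<times> word) list) \<in> nTL_rels n"
  shows "in_nTL_ideal n (fcoeff (sandwich u r v))"
  unfolding in_nTL_ideal_def using assms by (intro exI[of _ "[(1, u, r, v)]"]) simp

lemma in_nTL_ideal_add:
  assumes "in_nTL_ideal n (f :: word \<Rightarrow> 'k::field)" "in_nTL_ideal n g"
  shows "in_nTL_ideal n (\<lambda>z. f z + g z)"
proof -
  obtain ts1 :: "('k \<times> word \<times> ('k \<times> word) list \<times> word) list" where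
    "\<forall>(c, u, r, v) \<in> set ts1. r \<in> nTL_rels n"
    "\<forall>z. f z = sum_list (map (\<lambda>(c, u, r, v). c * fcoeff (sandwich u r v) z) ts1)"
    using assms(1) unfolding in_nTL_ideal_def by blast
  moreover obtain ts2 :: "('k \<times> word \<times> ('k \<times> word) list \<times> word) list" where
    "\<forall>(c, u, r, v) \<in> set ts2. r \<in> nTL_rels n"
    "\<forall>z. g z = sum_list (map (\<lambda>(c, u, r, v). c * fcoeff (sandwich u r v) z) ts2)"
    using assms(2) unfolding in_nTL_ideal_def by blast
  ultimately show ?thesis
    unfolding in_nTL_ideal_def by (intro exI[of _ "ts1 @ ts2"]) auto
qed

lemma nTL_reducible_monomial_relator:
  assumes "[((1::'k::field), y)] \<in> nTL_rels n"
  shows "nTL_reducible TYPE('k) n (p @ y @ q)"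
proof -
  have "(\<lambda>z. if z = p @ y @ q then (1::'k) else 0) = fcoeff (sandwich p [((1::'k), y)] q)"
    by (auto simp: fcoeff_sandwich)
  then show ?thesis
    unfolding nTL_reducible_def using in_nTL_ideal_sandwich[OF assms] by metis
qed

lemma nTL_reducible_square:
  assumes "1 \<le> a" "a \<le> n"
  shows "nTL_reducible TYPE('k::field) n (p @ [a, a] @ q)"
  using assms by (intro nTL_reducible_monomial_relator) (auto simp: nTL_rels_def)

lemma nTL_reducible_braid:
  assumes "c = Suc a \<or> a = Suc c" "1 \<le> a" "a \<le> n" "1 \<le> c" "c \<le> n"
  shows "nTL_reducible TYPE('k::field) n (p @ [a, c, a] @ q)"
  using assms by (intro nTL_reducible_monomial_relator) (auto simp: nTL_rels_def)

lemma nTL_reducible_swap: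
  assumes "1 \<le> i" "i \<le> n" "1 \<le> j" "j \<le> n" "i > j + 1 \<or> j > i + 1"
    and "nTL_reducible TYPE('k::field) n (p @ [j, i] @ q)"
  shows "nTL_reducible TYPE('k) n (p @ [i, j] @ q)"
proof -
  let ?r = "[((1::'k), [i, j]), (-1, [j, i])]"
  have rel: "?r \<in> nTL_rels n"
    using assms(1-5) unfolding nTL_rels_def by blast
  have "p @ [i, j] @ q \<noteq> p @ [j, i] @ q"
    using assms(5) by auto
  then have "(\<lambda>z. if z = p @ [i, j] @ q then (1::'k) else 0)
      = (\<lambda>z. (if z = p @ [j, i] @ q then 1 else 0) + fcoeff (sandwich p ?r q) z)"
    by (auto simp: fcoeff_sandwich)
  then show ?thesis
    using in_nTL_ideal_add[OF assms(6)[unfolded nTL_reducible_def] in_nTL_ideal_sandwich[OF rel]]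
    unfolding nTL_reducible_def by simp
qed

lemma nTL_reducible_commute_iff:
  assumes "set u \<subseteq> {1..n}" "1 \<le> a" "a \<le> n" "\<forall>x \<in> set u. a > x + 1 \<or> x > a + 1"
  shows "nTL_reducible TYPE('k::field) n (p @ u @ [a] @ q)
     \<longleftrightarrow> nTL_reducible TYPE('k) n (p @ [a] @ u @ q)"
  using assms
proof (induction u arbitrary: p)
  case Nil
  then show ?case by simp
next
  case (Cons x u)
  have "nTL_reducible TYPE('k) n (p @ [x, a] @ u @ q)
      \<longleftrightarrow> nTL_reducible TYPE('k) n (p @ [a, x] @ u @ q)"
    using Cons.prems nTL_reducible_swap[of a n x p "u @ q"] nTL_reducible_swap[of x n a p "u @ q"]
    by auto
  then show ?case
    using Cons.IH[of "p @ [x]"] Cons.prems by simp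
qed

lemma nTL_reducible_gap_without_neighbour:
  assumes "set (p @ [a] @ u @ [a] @ q) \<subseteq> {1..n}" "b = Suc a \<or> a = Suc b"
    and "a \<notin> set u" "b \<notin> set u"
  shows "nTL_reducible TYPE('k::field) n (p @ [a] @ u @ [a] @ q)"
  using assms
proof (induction "length u" arbitrary: p q a b u rule: less_induct)
  case less
  \<comment> \<open>the other neighbour of \<open>a\<close>; it is \<open>0\<close>, hence absent from \<open>u\<close>, when \<open>a = 1\<close> and \<open>b = 2\<close>\<close>
  define c where "c = (if b = Suc a then a - 1 else Suc a)"
  have a: "1 \<le> a" "a \<le> n" and u: "set u \<subseteq> {1..n}"
    using less.prems(1) by auto
  have adjacent: "c = Suc a \<or> a = Suc c"
    using less.prems(2) a(1) by (auto simp: c_def)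
  have far: "a > x + 1 \<or> x > a + 1" if "x \<in> set u" "x \<noteq> c" for x
  proof -
    have "x \<noteq> a" "x \<noteq> b" using that(1) less.prems(3,4) by auto
    then show ?thesis using that(2) less.prems(2) unfolding c_def by (cases "b = Suc a") auto
  qed
  consider (absent) "c \<notin> set u"
    | (once) u1 u2 where "u = u1 @ c # u2" "c \<notin> set u1" "c \<notin> set u2"
    | (twice) u1 v u2 where "u = u1 @ c # v @ c # u2" "c \<notin> set v"
    by (metis split_list_first)
  then show ?case
  proof cases
    case absent
    have "nTL_reducible TYPE('k) n (p @ u @ [a] @ [a] @ q)"
      using nTL_reducible_square[of a n "p @ u" q] a by simp
    then show ?thesis
      using nTL_reducible_commute_iff[OF u a] far absent by blast
  next
    case once
    have c: "1 \<le> c" "c \<le> n"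
      using u once(1) by auto
    have u1: "set u1 \<subseteq> {1..n}" and u2: "set u2 \<subseteq> {1..n}"
      using u once(1) by auto
    have far1: "\<forall>x \<in> set u1. a > x + 1 \<or> x > a + 1"
      and far2: "\<forall>x \<in> set u2. a > x + 1 \<or> x > a + 1"
      using far once by auto
    have "nTL_reducible TYPE('k) n ((p @ u1 @ [a, c]) @ [a] @ u2 @ q)"
      using nTL_reducible_braid[OF adjacent a c, of "p @ u1" "u2 @ q"] by simp
    then have "nTL_reducible TYPE('k) n ((p @ u1 @ [a, c]) @ u2 @ [a] @ q)"
      using nTL_reducible_commute_iff[OF u2 a far2] by blast
    then have "nTL_reducible TYPE('k) n (p @ u1 @ [a] @ (c # u2 @ [a] @ q))"
      by simp
    then have "nTL_reducible TYPE('k) n (p @ [a] @ u1 @ (c # u2 @ [a] @ q))"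
      using nTL_reducible_commute_iff[OF u1 a far1] by blast
    then show ?thesis
      using once(1) by simp
  next
    case twice
    have "nTL_reducible TYPE('k) n ((p @ [a] @ u1) @ [c] @ v @ [c] @ (u2 @ [a] @ q))"
    proof (rule less.hyps)
      show "length v < length u" using twice(1) by simp
      show "set ((p @ [a] @ u1) @ [c] @ v @ [c] @ u2 @ [a] @ q) \<subseteq> {1..n}"
        using less.prems(1) twice(1) by auto
      show "a = Suc c \<or> c = Suc a" using adjacent by auto
      show "a \<notin> set v" using less.prems(3) twice(1) by simp
    qed (use twice(2) in simp)
    then show ?thesis using twice(1) by simp
  qed
qed

lemma nTL_irreducible_neighbour_in_gap:
  assumes "set w \<subseteq> {1..n}" "\<not> nTL_reducible TYPE('k::field) n w"
    and "w = p @ a # u @ a # q" "a \<notin> set u" "b = Suc a \<or> a = Suc b"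
  shows "b \<in> set u"
  using nTL_reducible_gap_without_neighbour[of p a u q n b] assms by auto

lemma count_list_le_Suc_count_list_if_separated:
  assumes "\<forall>p u q. w = p @ a # u @ a # q \<longrightarrow> a \<notin> set u \<longrightarrow> b \<in> set u"
  shows "count_list w a \<le> count_list w b + 1"
  using assms
proof (induction "length w" arbitrary: w rule: less_induct)
  case less
  show ?case
  proof (cases "a \<in> set w")
    case False
    then show ?thesis by (simp add: count_list_0_iff)
  next
    case True
    then obtain p w' where w: "w = p @ a # w'" "a \<notin> set p"
      by (metis split_list_first)
    show ?thesis
    proof (cases "a \<in> set w'")
      case False
      then show ?thesis using w by (simp add: count_list_0_iff)
    next
      case True
      then obtain u q where w': "w' = u @ a # q" "a \<notin> set u"
        by (metis split_list_first)
      have "b \<in> set u"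
        using less.prems w w' by blast
      then have b: "count_list u b \<ge> 1"
        by (metis count_list_0_iff less_one not_le)
      have "count_list (a # q) a \<le> count_list (a # q) b + 1"
      proof (rule less.hyps)
        show "length (a # q) < length w" using w w' by simp
        show "\<forall>p' u' q'. a # q = p' @ a # u' @ a # q' \<longrightarrow> a \<notin> set u' \<longrightarrow> b \<in> set u'"
          using less.prems w w' by (metis append.assoc append_Cons)
      qed
      moreover have "a \<noteq> b" using \<open>b \<in> set u\<close> w'(2) by blast
      ultimately show ?thesis
        using w w' b by (simp add: count_list_0_iff)
    qed
  qed
qed

lemma nTL_irreducible_count_le_neighbour:
  assumes "set w \<subseteq> {1..n}" "\<not> nTL_reducible TYPE('k::field) n w"
    and "b = Suc a \<or> a = Suc b"
  shows "count_list w a \<le> count_list w b + 1"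
  using assms nTL_irreducible_neighbour_in_gap[OF assms(1,2)]
  by (intro count_list_le_Suc_count_list_if_separated) blast

lemma nTL_irreducible_count_le_card_below:
  assumes "set w \<subseteq> {1..n}" "\<not> nTL_reducible TYPE('k::field) n w"
  shows "count_list w i \<le> card {k \<in> set w. k \<le> i}"
proof (induction i)
  case 0
  have "0 \<notin> set w" using assms(1) by auto
  then show ?case by (simp add: count_list_0_iff)
next
  case (Suc m)
  show ?case
  proof (cases "Suc m \<in> set w")
    case False
    then show ?thesis by (simp add: count_list_0_iff)
  next
    case True
    then have "{k \<in> set w. k \<le> Suc m} = insert (Suc m) {k \<in> set w. k \<le> m}"
      by auto
    then have "card {k \<in> set w. k \<le> Suc m} = Suc (card {k \<in> set w. k \<le> m})"
      by simp
    moreover have "count_list w (Suc m) \<le> count_list w m + 1"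
      using nTL_irreducible_count_le_neighbour[OF assms] by simp
    ultimately show ?thesis using Suc by simp
  qed
qed

lemma nTL_irreducible_count_le_card_above:
  assumes "set w \<subseteq> {1..n}" "\<not> nTL_reducible TYPE('k::field) n w"
  shows "count_list w i \<le> card {k \<in> set w. i \<le> k}"
proof (induction "Suc n - i" arbitrary: i rule: less_induct)
  case less
  show ?case
  proof (cases "i \<in> set w")
    case False
    then show ?thesis by (simp add: count_list_0_iff)
  next
    case True
    then have "i \<le> n" using assms(1) by auto
    then have "Suc n - Suc i < Suc n - i" by simp
    then have IH: "count_list w (Suc i) \<le> card {k \<in> set w. Suc i \<le> k}"
      using less by blast
    have "{k \<in> set w. i \<le> k} = insert i {k \<in> set w. Suc i \<le> k}"
      using True by auto
    then have "card {k \<in> set w. i \<le> k} = Suc (card {k \<in> set w. Suc i \<le> k})"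
      by simp
    moreover have "count_list w i \<le> count_list w (Suc i) + 1"
      using nTL_irreducible_count_le_neighbour[OF assms] by simp
    ultimately show ?thesis using IH by simp
  qed
qed

theorem lemma7p1:
  fixes w :: "nat list" and n i :: nat
  assumes "nTL_monomial TYPE('k::field) n w"
    and "i \<in> set w"
  shows "count_list w i \<le> card {k \<in> set w. k \<le> i}
       \<and> count_list w i \<le> card {k \<in> set w. i \<le> k}"
proof -
  have "set w \<subseteq> {1..n}" "\<not> nTL_reducible TYPE('k) n w"
    using assms(1) unfolding nTL_monomial_def by blast+
  then show ?thesis
    using nTL_irreducible_count_le_card_below nTL_irreducible_count_le_card_above by blast
qed

end
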